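(* In the supersample setting described in the context, assume the loss takes values in $[0,1]$. Then \[ \left|\mathrm{Err}\right| \leq\frac{2}{n}\sum_{i=1}^n\sqrt{2I(L^+_{i};U_i)}\leq \frac{2}{n}\sum_{i=1}^n\sqrt{2I(f_W(X^+_{i});U_i\mid\widetilde{Z})}. \]
   Context: Let $\mathcal Z=\mathcal X\times\mathcal Y$ and let $\mu$ be a distribution on $\mathcal Z$. A (possibly randomized) learning algorithm $\mathcal A$ maps a training sample in $\mathcal Z^n$ to a hypothesis $W\in\mathcal W$; each $w$ defines a predictor $f_w:\mathcal X\to\mathcal Y$, and the loss depends on $w$ only through the prediction, i.e. $\ell(w,(x,y))=\tilde\ell(f_w(x),y)$ for some function $\tilde\ell$. For $S=(Z_1,\dots,Z_n)\sim\mu^{n}$ and $W\sim P_{W|S}$, let $L_\mu=\mathbb E_W\mathbb E_{Z'\sim\mu}[\ell(W,Z')]$ (with $Z'$ independent of $(S,W)$), $L_n=\mathbb E_{W,S}[\frac1n\sum_i\ell(W,Z_i)]$, $\mathrm{Err}=L_\mu-L_n$. Supersample: $\widetilde Z=(\widetilde Z_{i,j})_{i\in\{1,\dots,n\},j\in\{0,1\}}$ with i.i.d. entries of law $\mu$; $U=(U_1,\dots,U_n)$ uniform on $\{0,1\}^n$, independent of $\widetilde Z$; $W=\mathcal A(\widetilde Z_U)$ with $\widetilde Z_U=(\widetilde Z_{1,U_1},\dots,\widetilde Z_{n,U_n})$. Write $\widetilde Z_{i,0}=(X_i^+,Y_i^+)$ and $L_i^+=\ell(W,\widetilde Z_{i,0})$.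 Mutual information is in nats. *)

theory Defs
  imports "HOL-Probability.Probability"
begin

definition loss :: "('w \<Rightarrow> 'x \<Rightarrow> 'p) \<Rightarrow> ('p \<Rightarrow> 'y \<Rightarrow> real) \<Rightarrow> 'w \<Rightarrow> 'x \<times> 'y \<Rightarrow> real" where
  "loss f lt w z = lt (f w (fst z)) (snd z)"

definition pop_risk :: "nat \<Rightarrow> ('x \<times> 'y) measure \<Rightarrow> ((nat \<Rightarrow> 'x \<times> 'y) \<Rightarrow> 'w measure)
    \<Rightarrow> ('w \<Rightarrow> 'x \<Rightarrow> 'p) \<Rightarrow> ('p \<Rightarrow> 'y \<Rightarrow> real) \<Rightarrow> real" where
  "pop_risk n \<mu> A f lt =
     (\<integral>s. (\<integral>w. (\<integral>z. loss f lt w z \<partial>\<mu>) \<partial>(A s)) \<partial>(PiM {..<n} (\<lambda>_. \<mu>)))"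

definition emp_risk :: "nat \<Rightarrow> ('x \<times> 'y) measure \<Rightarrow> ((nat \<Rightarrow> 'x \<times> 'y) \<Rightarrow> 'w measure)
    \<Rightarrow> ('w \<Rightarrow> 'x \<Rightarrow> 'p) \<Rightarrow> ('p \<Rightarrow> 'y \<Rightarrow> real) \<Rightarrow> real" where
  "emp_risk n \<mu> A f lt =
     (\<integral>s. (\<integral>w. (1 / real n) * (\<Sum>i<n. loss f lt w (s i)) \<partial>(A s)) \<partial>(PiM {..<n} (\<lambda>_. \<mu>)))"

definition gen_err :: "nat \<Rightarrow> ('x \<times> 'y) measure \<Rightarrow> ((nat \<Rightarrow> 'x \<times> 'y) \<Rightarrow> 'w measure)
    \<Rightarrow> ('w \<Rightarrow> 'x \<Rightarrow> 'p) \<Rightarrow> ('p \<Rightarrow> 'y \<Rightarrow> real) \<Rightarrow> real" where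
  "gen_err n \<mu> A f lt = pop_risk n \<mu> A f lt - emp_risk n \<mu> A f lt"

text \<open>Supersample: Ztilde indexed by (i,j) with i<n and j::bool (False = column 0, True = column 1),
  U uniform on {0,1}^n (n independent fair bits), W ~ A(Ztilde_U).\<close>
definition zt_space :: "nat \<Rightarrow> ('x \<times> 'y) measure \<Rightarrow> (nat \<times> bool \<Rightarrow> 'x \<times> 'y) measure" where
  "zt_space n \<mu> = PiM ({..<n} \<times> UNIV) (\<lambda>_. \<mu>)"

definition u_space :: "nat \<Rightarrow> (nat \<Rightarrow> bool) measure" where
  "u_space n = PiM {..<n} (\<lambda>_. measure_pmf (bernoulli_pmf (1/2)))"

definition select :: "nat \<Rightarrow> (nat \<times> bool \<Rightarrow> 'z) \<Rightarrow> (nat \<Rightarrow> bool) \<Rightarrow> nat \<Rightarrow> 'z" where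
  "select n zt u = (\<lambda>i\<in>{..<n}. zt (i, u i))"

definition supersample ::
  "nat \<Rightarrow> ('x \<times> 'y) measure \<Rightarrow> 'w measure \<Rightarrow> ((nat \<Rightarrow> 'x \<times> 'y) \<Rightarrow> 'w measure)
    \<Rightarrow> ((nat \<times> bool \<Rightarrow> 'x \<times> 'y) \<times> (nat \<Rightarrow> bool) \<times> 'w) measure" where
  "supersample n \<mu> MW A =
     bind (zt_space n \<mu>) (\<lambda>zt.
     bind (u_space n) (\<lambda>u.
     bind (A (select n zt u)) (\<lambda>w.
       return (zt_space n \<mu> \<Otimes>\<^sub>M u_space n \<Otimes>\<^sub>M MW) (zt, u, w))))"

end

theory Submission
  imports Defs
begin

text \<open>
  Since \<open>U\<^sub>i\<close> is a fair bit, the joint law of \<open>(V, U\<^sub>i)\<close> has density at most 2 with respect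
  to the product of the marginals, for every random variable \<open>V\<close>.  So each mutual information
  below is the integral of a bounded log-density, and it dominates
  \<open>E[ln k] - E\<^sub>\<otimes>[k] + 1\<close> for every positive test function \<open>k\<close> (Gibbs' inequality).

  \<open>Z\<^sub>i\<^sub>,\<^sub>0\<close> is a training point when \<open>U\<^sub>i = 0\<close> and an independent test point when \<open>U\<^sub>i = 1\<close>,
  so \<open>D\<^sub>i = E[(L\<^sup>+\<^sub>i - 1/2) (\<plusminus>1)]\<close> is half the gap between the test risk and the \<open>i\<close>-th training loss,
  and \<open>Err = (2/n) \<Sum> D\<^sub>i\<close>.  The test function \<open>k = exp (2 D\<^sub>i (L - 1/2) (\<plusminus>1))\<close> together with
  \<open>cosh t \<le> 1 + t\<^sup>2\<close> yields \<open>D\<^sub>i\<^sup>2 \<le> I(L\<^sup>+\<^sub>i; U\<^sub>i)\<close>.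

  For the second inequality, \<open>L\<^sup>+\<^sub>i\<close> is a function of \<open>(f\<^sub>W(X\<^sup>+\<^sub>i), Z)\<close>; pulling the density of
  \<open>(L\<^sup>+\<^sub>i, U\<^sub>i)\<close> back along this function is a test function for \<open>I(U\<^sub>i; f\<^sub>W(X\<^sup>+\<^sub>i), Z)\<close>, which
  equals the conditional information \<open>I(U\<^sub>i; f\<^sub>W(X\<^sup>+\<^sub>i) | Z)\<close> because \<open>U\<^sub>i\<close> is independent of \<open>Z\<close>.
\<close>

section \<open>KL divergence of a bounded density\<close>

lemma gibbs_inequality_pointwise:
  fixes p k :: real
  assumes "0 \<le> p" "0 \<le> k" "0 < p \<longrightarrow> 0 < k"
  shows "p * ln k - p * ln p \<le> k - p"
proof (cases "p = 0")
  case False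
  then have "0 < p" "0 < k" using assms by auto
  then have "p * ln (k / p) \<le> p * (k / p - 1)"
    by (intro mult_left_mono ln_le_minus_one) auto
  then show ?thesis using \<open>0 < p\<close> \<open>0 < k\<close> by (simp add: ln_div algebra_simps)
qed (use assms in simp)

lemma abs_mult_ln_le:
  fixes p c :: real
  assumes "0 \<le> p" "p \<le> c"
  shows "\<bar>p * ln p\<bar> \<le> c\<^sup>2 + 1"
proof (cases "p = 0")
  case False
  then have p: "0 < p" using assms by simp
  have "p * ln p \<le> p * (p - 1)" using p by (intro mult_left_mono ln_le_minus_one) auto
  also have "\<dots> \<le> p * p" using p by (intro mult_left_mono) auto
  also have "\<dots> \<le> c * c" using assms by (intro mult_mono) auto
  finally have upper: "p * ln p \<le> c\<^sup>2" by (simp add: power2_eq_square)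
  have "p * ln (1 / p) \<le> p * (1 / p - 1)" using p by (intro mult_left_mono ln_le_minus_one) auto
  moreover have "p * ln (1 / p) = - (p * ln p)" "p * (1 / p - 1) = 1 - p"
    using p by (simp_all add: ln_div right_diff_distrib)
  ultimately have lower: "p - 1 \<le> p * ln p" by linarith
  show ?thesis unfolding abs_le_iff using upper lower assms zero_le_power2[of c] by linarith
qed simp

lemma absolutely_continuous_of_emeasure_le:
  assumes "sets N = sets M" and "\<And>C. C \<in> sets M \<Longrightarrow> emeasure N C \<le> ennreal c * emeasure M C"
  shows "absolutely_continuous M N"
  unfolding absolutely_continuous_def
proof
  fix C assume "C \<in> null_sets M"
  then show "C \<in> null_sets N" using assms(1) assms(2)[of C] by (auto simp: null_sets_def)
qed

lemma AE_RN_deriv_le: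
  fixes c :: real
  assumes "finite_measure M" and sets_N: "sets N = sets M"
    and dom: "\<And>C. C \<in> sets M \<Longrightarrow> emeasure N C \<le> ennreal c * emeasure M C"
  shows "AE x in M. RN_deriv M N x \<le> c"
proof -
  interpret M: finite_measure M by fact
  define r where "r = RN_deriv M N"
  have r[measurable]: "r \<in> borel_measurable M" unfolding r_def by simp
  have N_r: "density M r = N"
    unfolding r_def using absolutely_continuous_of_emeasure_le[OF sets_N dom] sets_N
    by (rule M.density_RN_deriv)
  define B where "B = {x \<in> space M. ennreal c < r x}"
  have B[measurable]: "B \<in> sets M" unfolding B_def by measurable
  \<comment> \<open>On \<open>B\<close> the excess \<open>r - c\<close> integrates to \<open>N B - c * M B \<le> 0\<close>.\<close>
  have "(\<integral>\<^sup>+x. r x * indicator B x \<partial>M) = (\<integral>\<^sup>+x. (r x - c) * indicator B x + ennreal c * indicator B x \<partial>M)"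
    by (intro nn_integral_cong)
      (auto simp: B_def diff_add_cancel_ennreal less_imp_le indicator_def)
  also have "\<dots> = (\<integral>\<^sup>+x. (r x - c) * indicator B x \<partial>M) + (\<integral>\<^sup>+x. ennreal c * indicator B x \<partial>M)"
    by (rule nn_integral_add) auto
  also have "(\<integral>\<^sup>+x. ennreal c * indicator B x \<partial>M) = c * emeasure M B"
    by (rule nn_integral_cmult_indicator) (rule B)
  finally have "emeasure N B = (\<integral>\<^sup>+x. (r x - c) * indicator B x \<partial>M) + c * emeasure M B"
    using N_r[symmetric] by (simp add: emeasure_density)
  then have "(\<integral>\<^sup>+x. (r x - c) * indicator B x \<partial>M) + c * emeasure M B \<le> 0 + c * emeasure M B"
    using dom[OF B] by simp
  moreover have "c * emeasure M B \<noteq> \<infinity>"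
    using M.emeasure_finite[of B] by (simp add: ennreal_mult_eq_top_iff)
  ultimately have "(\<integral>\<^sup>+x. (r x - c) * indicator B x \<partial>M) = 0"
    by (simp add: add.commute[of _ "c * emeasure M B"] ennreal_add_left_cancel_le)
  then have "AE x in M. (r x - c) * indicator B x = 0"
    by (subst (asm) nn_integral_0_iff_AE) auto
  then show ?thesis unfolding r_def[symmetric]
  proof (rule AE_mp[OF _ AE_I2])
    fix x assume "x \<in> space M"
    then show "(r x - c) * indicator B x = 0 \<longrightarrow> r x \<le> c"
      by (cases "x \<in> B") (auto simp: B_def intro: ennreal_minus_eq_0)
  qed
qed

lemma KL_divergence_bounded_density:
  fixes c :: real
  assumes "finite_measure M" "prob_space N" and sets_N: "sets N = sets M" and "0 \<le> c"
    and dom: "\<And>C. C \<in> sets M \<Longrightarrow> emeasure N C \<le> ennreal c * emeasure M C"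
  obtains p where "p \<in> borel_measurable M" "\<And>x. 0 \<le> p x" "\<And>x. p x \<le> c"
    "N = density M (\<lambda>x. ennreal (p x))"
    "KL_divergence (exp 1) M N = (\<integral>x. ln (p x) \<partial>N)"
    "integrable N (\<lambda>x. ln (p x))"
proof -
  interpret M: finite_measure M by fact
  have ac: "absolutely_continuous M N" using sets_N dom by (rule absolutely_continuous_of_emeasure_le)
  define r where "r = RN_deriv M N"
  have N_r: "density M r = N" unfolding r_def using ac sets_N by (rule M.density_RN_deriv)
  define p where "p x = min (enn2real (r x)) c" for x
  have p[measurable]: "p \<in> borel_measurable M" unfolding p_def r_def by measurable
  have p0: "0 \<le> p x" and pc: "p x \<le> c" for x using \<open>0 \<le> c\<close> by (auto simp: p_def)
  have p_r: "AE x in M. ennreal (p x) = r x"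
    using AE_RN_deriv_le[OF assms(1) sets_N dom] unfolding r_def[symmetric]
  proof (rule eventually_mono)
    fix x assume "r x \<le> ennreal c"
    then show "ennreal (p x) = r x" using \<open>0 \<le> c\<close>
      by (cases "r x") (auto simp: p_def min_def enn2real_ennreal top_unique)
  qed
  have N_p: "N = density M (\<lambda>x. ennreal (p x))"
    using N_r density_cong[OF _ _ p_r] by (auto simp: r_def)
  have "AE x in M. entropy_density (exp 1) M N x = ln (p x)"
    using p_r
  proof eventually_elim
    case (elim x)
    then show ?case
      unfolding entropy_density_def r_def[symmetric] using p0[of x]
      by (auto simp: log_def simp flip: elim)
  qed
  then have "AE x in N. entropy_density (exp 1) M N x = ln (p x)"
    using ac absolutely_continuous_AE sets_N by blast
  then have "KL_divergence (exp 1) M N = (\<integral>x. ln (p x) \<partial>N)"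
    unfolding KL_divergence_def
    by (intro integral_cong_AE) (auto simp: measurable_cong_sets[OF sets_N refl])
  moreover have "integrable N (\<lambda>x. ln (p x))"
  proof -
    have "integrable M (\<lambda>x. p x *\<^sub>R ln (p x))"
      by (intro M.integrable_const_bound[where B="c\<^sup>2 + 1"]) (auto intro!: abs_mult_ln_le p0 pc)
    then show ?thesis using p0 by (subst N_p, subst integrable_density) auto
  qed
  ultimately show ?thesis using that p p0 pc N_p by blast
qed

lemma KL_divergence_ge_variational:
  fixes c :: real and k :: "'a \<Rightarrow> real"
  assumes "finite_measure M" "prob_space N" "sets N = sets M" "0 \<le> c"
    and "\<And>C. C \<in> sets M \<Longrightarrow> emeasure N C \<le> ennreal c * emeasure M C"
    and k[measurable]: "k \<in> borel_measurable M" and k0: "\<And>x. 0 \<le> k x"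
    and int_k: "integrable M k" and int_ln_k: "integrable N (\<lambda>x. ln (k x))"
    and k_pos: "AE x in N. 0 < k x"
  shows "(\<integral>x. ln (k x) \<partial>N) - (\<integral>x. k x \<partial>M) + 1 \<le> KL_divergence (exp 1) M N"
proof -
  interpret M: finite_measure M by fact
  interpret N: prob_space N by fact
  obtain p where p[measurable]: "p \<in> borel_measurable M" and p0: "\<And>x. 0 \<le> p x"
    and pc: "\<And>x. p x \<le> c" and N_p: "N = density M (\<lambda>x. ennreal (p x))"
    and KL: "KL_divergence (exp 1) M N = (\<integral>x. ln (p x) \<partial>N)"
    and int_ln_p: "integrable N (\<lambda>x. ln (p x))"
    using KL_divergence_bounded_density[OF assms(1-5)] by blast
  have int_N: "(\<integral>x. g x \<partial>N) = (\<integral>x. p x * g x \<partial>M)" if "g \<in> borel_measurable M" for g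
    using that p0 by (subst N_p, subst integral_density) auto
  have int_p: "integrable M p"
    by (intro M.integrable_const_bound[where B=c]) (use p0 pc in auto)
  have "(\<integral>x. p x \<partial>M) = 1"
    using int_N[of "\<lambda>_. 1"] N.prob_space by simp
  moreover have int_p_ln: "integrable M (\<lambda>x. p x * ln (g x))"
    if "integrable N (\<lambda>x. ln (g x))" "g \<in> borel_measurable M" for g
    using that p0 by (subst (asm) N_p, subst (asm) integrable_density) auto
  moreover have "AE x in M. 0 < p x \<longrightarrow> 0 < k x"
    using k_pos by (subst (asm) N_p, subst (asm) AE_density) auto
  then have "(\<integral>x. p x * ln (k x) - p x * ln (p x) \<partial>M) \<le> (\<integral>x. k x - p x \<partial>M)"
    using int_p_ln[OF int_ln_k k] int_p_ln[OF int_ln_p p] int_k int_p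
    by (intro integral_mono_AE) (auto intro!: gibbs_inequality_pointwise p0 k0 elim!: eventually_mono)
  ultimately show ?thesis
    using int_p_ln[OF int_ln_k k] int_p_ln[OF int_ln_p p] int_k int_p
    by (simp add: KL int_N Bochner_Integration.integral_diff)
qed

lemma KL_divergence_distr_le:
  fixes c :: real
  assumes "finite_measure M" "prob_space N" and sets_N: "sets N = sets M" and "0 \<le> c"
    and dom: "\<And>C. C \<in> sets M \<Longrightarrow> emeasure N C \<le> ennreal c * emeasure M C"
    and H[measurable]: "H \<in> measurable M M'"
  shows "KL_divergence (exp 1) (distr M M' H) (distr N M' H) \<le> KL_divergence (exp 1) M N"
proof -
  interpret M: finite_measure M by fact
  interpret N: prob_space N by fact
  have H_N[measurable]: "H \<in> measurable N M'" using H by (simp add: measurable_cong_sets[OF sets_N refl])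
  interpret M': finite_measure "distr M M' H" by (rule M.finite_measure_distr[OF H])
  interpret N': prob_space "distr N M' H" by (rule N.prob_space_distr[OF H_N])
  have sets': "sets (distr N M' H) = sets (distr M M' H)" by simp
  have dom': "emeasure (distr N M' H) C \<le> ennreal c * emeasure (distr M M' H) C"
    if "C \<in> sets (distr M M' H)" for C
    using that dom[of "H -` C \<inter> space M"] by (simp add: emeasure_distr sets_eq_imp_space_eq[OF sets_N])
  obtain q where q: "q \<in> borel_measurable (distr M M' H)" and q0: "\<And>x. 0 \<le> q x"
    and qc: "\<And>x. q x \<le> c" and N'_q: "distr N M' H = density (distr M M' H) (\<lambda>x. ennreal (q x))"
    and KL': "KL_divergence (exp 1) (distr M M' H) (distr N M' H) = (\<integral>x. ln (q x) \<partial>distr N M' H)"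
    and int_ln_q: "integrable (distr N M' H) (\<lambda>x. ln (q x))"
    using KL_divergence_bounded_density[OF M'.finite_measure_axioms N'.prob_space_axioms sets' \<open>0 \<le> c\<close> dom']
    by blast
  from q have [measurable]: "q \<in> borel_measurable M'" unfolding measurable_distr_eq1 .
  \<comment> \<open>The density \<open>q\<close> pulled back along \<open>H\<close> is a test function whose variational value is the
    divergence of the image measures.\<close>
  have "(\<integral>x. ln (q (H x)) \<partial>N) - (\<integral>x. q (H x) \<partial>M) + 1 \<le> KL_divergence (exp 1) M N"
  proof (rule KL_divergence_ge_variational[OF assms(1-5)])
    show "integrable M (\<lambda>x. q (H x))"
      by (intro M.integrable_const_bound[where B=c] AE_I2) (use q0 qc in auto)
    show "integrable N (\<lambda>x. ln (q (H x)))"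
      using int_ln_q by (subst (asm) integrable_distr_eq) auto
    have "AE x in distr N M' H. 0 < q x"
      unfolding N'_q using q0 by (subst AE_density) (auto intro!: AE_I2)
    then show "AE x in N. 0 < q (H x)" by (subst (asm) AE_distr_iff) auto
  qed (use q0 in auto)
  moreover have "(\<integral>x. q (H x) \<partial>M) = 1"
  proof -
    have "(\<integral>x. q (H x) \<partial>M) = (\<integral>x. q x \<partial>distr M M' H)" by (subst integral_distr) auto
    also have "\<dots> = (\<integral>x. 1 \<partial>distr N M' H)" unfolding N'_q using q0 by (subst integral_density) auto
    finally show ?thesis using N'.prob_space by simp
  qed
  moreover have "(\<integral>x. ln (q (H x)) \<partial>N) = (\<integral>x. ln (q x) \<partial>distr N M' H)"
    by (subst integral_distr) auto
  ultimately show ?thesis unfolding KL' by simp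
qed

section \<open>Mutual information with a fair bit\<close>

abbreviation fair_bit :: "bool measure" where
  "fair_bit \<equiv> measure_pmf (bernoulli_pmf (1/2))"

lemma emeasure_fair_bit: "2 * emeasure fair_bit E = indicator E True + indicator E False"
proof -
  have "emeasure fair_bit E = (\<integral>\<^sup>+b. indicator E b \<partial>fair_bit)"
    by (subst nn_integral_indicator) auto
  also have "\<dots> = indicator E True * inverse 2 + indicator E False * inverse 2"
    by (subst nn_integral_bernoulli_pmf) auto
  finally have "emeasure fair_bit E = indicator E True * inverse 2 + indicator E False * inverse 2" .
  moreover have "2 * inverse 2 = (1::ennreal)"
    by (simp flip: divide_ennreal_def)
  ultimately show ?thesis by (simp add: distrib_left mult.left_commute)
qed

lemma emeasure_pair_fair_bit:
  assumes "finite_measure M" and C: "C \<in> sets (M \<Otimes>\<^sub>M count_space UNIV)"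
  shows "2 * emeasure (M \<Otimes>\<^sub>M fair_bit) C
    = emeasure M {x \<in> space M. (x, True) \<in> C} + emeasure M {x \<in> space M. (x, False) \<in> C}"
proof -
  have sets_C: "C \<in> sets (M \<Otimes>\<^sub>M fair_bit)"
    using C by (simp cong: sets_pair_measure_cong)
  have [measurable]: "{x \<in> space M. (x, b) \<in> C} \<in> sets M" for b
    using C by measurable
  have "2 * emeasure (M \<Otimes>\<^sub>M fair_bit) C = (\<integral>\<^sup>+x. 2 * emeasure fair_bit (Pair x -` C) \<partial>M)"
    using sets_C by (simp add: measure_pmf.emeasure_pair_measure_alt nn_integral_cmult)
  also have "\<dots> = (\<integral>\<^sup>+x. indicator {x \<in> space M. (x, True) \<in> C} x
      + indicator {x \<in> space M. (x, False) \<in> C} x \<partial>M)"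
    by (intro nn_integral_cong) (simp add: emeasure_fair_bit indicator_def)
  also have "\<dots> = emeasure M {x \<in> space M. (x, True) \<in> C} + emeasure M {x \<in> space M. (x, False) \<in> C}"
    by (subst nn_integral_add) auto
  finally show ?thesis .
qed

lemma emeasure_joint_le_twice_product:
  fixes Y :: "'a \<Rightarrow> bool"
  assumes "prob_space P" and X[measurable]: "X \<in> measurable P S"
    and Y[measurable]: "Y \<in> measurable P (count_space UNIV)"
    and C[measurable]: "C \<in> sets (S \<Otimes>\<^sub>M count_space UNIV)"
  shows "emeasure (distr P (S \<Otimes>\<^sub>M count_space UNIV) (\<lambda>\<omega>. (X \<omega>, Y \<omega>))) C
    \<le> 2 * emeasure (distr P S X \<Otimes>\<^sub>M fair_bit) C"
proof -
  interpret P: prob_space P by fact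
  define C\<^sub>b where "C\<^sub>b b = {x \<in> space S. (x, b) \<in> C}" for b
  have [measurable]: "C\<^sub>b b \<in> sets S" for b unfolding C\<^sub>b_def by measurable
  have "emeasure (distr P (S \<Otimes>\<^sub>M count_space UNIV) (\<lambda>\<omega>. (X \<omega>, Y \<omega>))) C
      = emeasure P ((\<lambda>\<omega>. (X \<omega>, Y \<omega>)) -` C \<inter> space P)"
    by (subst emeasure_distr) auto
  also have "\<dots> \<le> emeasure P ((X -` C\<^sub>b True \<inter> space P) \<union> (X -` C\<^sub>b False \<inter> space P))"
    by (intro emeasure_mono) (auto simp: C\<^sub>b_def measurable_space[OF X], metis (full_types))
  also have "\<dots> \<le> emeasure P (X -` C\<^sub>b True \<inter> space P) + emeasure P (X -` C\<^sub>b False \<inter> space P)"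
    by (intro emeasure_subadditive) measurable
  also have "\<dots> = 2 * emeasure (distr P S X \<Otimes>\<^sub>M fair_bit) C"
    using emeasure_pair_fair_bit[of "distr P S X" C]
    by (simp add: emeasure_distr C\<^sub>b_def P.finite_measure_distr cong: sets_pair_measure_cong)
  finally show ?thesis .
qed

lemma emeasure_joint_swap_le_twice_product:
  fixes Y :: "'a \<Rightarrow> bool"
  assumes "prob_space P" and X[measurable]: "X \<in> measurable P S"
    and Y[measurable]: "Y \<in> measurable P (count_space UNIV)"
    and C[measurable]: "C \<in> sets (count_space UNIV \<Otimes>\<^sub>M S)"
  shows "emeasure (distr P (count_space UNIV \<Otimes>\<^sub>M S) (\<lambda>\<omega>. (Y \<omega>, X \<omega>))) C
    \<le> 2 * emeasure (fair_bit \<Otimes>\<^sub>M distr P S X) C"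
proof -
  interpret P: prob_space P by fact
  interpret PX: prob_space "distr P S X" by (rule P.prob_space_distr) simp
  interpret swap: pair_prob_space fair_bit "distr P S X" ..
  define C' where "C' = (\<lambda>(x, b). (b, x)) -` C \<inter> space (S \<Otimes>\<^sub>M count_space UNIV)"
  have C'[measurable]: "C' \<in> sets (S \<Otimes>\<^sub>M count_space UNIV)" unfolding C'_def by measurable
  have "(\<lambda>\<omega>. (X \<omega>, Y \<omega>)) -` C' \<inter> space P = (\<lambda>\<omega>. (Y \<omega>, X \<omega>)) -` C \<inter> space P"
    using measurable_space[OF X] by (auto simp: C'_def space_pair_measure)
  then have "emeasure (distr P (count_space UNIV \<Otimes>\<^sub>M S) (\<lambda>\<omega>. (Y \<omega>, X \<omega>))) C
      = emeasure (distr P (S \<Otimes>\<^sub>M count_space UNIV) (\<lambda>\<omega>. (X \<omega>, Y \<omega>))) C'"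
    by (simp add: emeasure_distr)
  also have "\<dots> \<le> 2 * emeasure (distr P S X \<Otimes>\<^sub>M fair_bit) C'"
    by (rule emeasure_joint_le_twice_product) (use assms in auto)
  also have "emeasure (distr P S X \<Otimes>\<^sub>M fair_bit) C' = emeasure (fair_bit \<Otimes>\<^sub>M distr P S X) C"
  proof -
    have "C \<in> sets (fair_bit \<Otimes>\<^sub>M distr P S X)"
      using C by (simp cong: sets_pair_measure_cong)
    moreover have "C' = (\<lambda>(x, b). (b, x)) -` C \<inter> space (distr P S X \<Otimes>\<^sub>M fair_bit)"
      by (simp add: C'_def space_pair_measure)
    ultimately show ?thesis
      by (subst swap.distr_pair_swap) (simp add: emeasure_distr)
  qed
  finally show ?thesis .
qed

lemma exp_add_exp_minus_le:
  fixes t :: real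
  assumes "\<bar>t\<bar> \<le> 1"
  shows "exp t + exp (- t) \<le> 2 + 2 * t\<^sup>2"
proof -
  define a where "a = \<bar>t\<bar>"
  have a: "0 \<le> a" "a \<le> 1" using assms by (auto simp: a_def)
  have "exp t + exp (- t) = exp a + exp (- a)" by (cases "t \<ge> 0") (auto simp: a_def)
  moreover have "exp a \<le> 1 + a + a\<^sup>2" using a by (rule exp_bound)
  moreover have "exp (- a) \<le> 1 - a + a\<^sup>2"
  proof -
    have "1 \<le> (1 + a) * (1 - a + a\<^sup>2)"
      using a by (simp add: algebra_simps power2_eq_square power3_eq_cube)
    also have "\<dots> \<le> exp a * (1 - a + a\<^sup>2)"
      using a by (intro mult_right_mono exp_ge_add_one_self) (simp add: power2_eq_square mult_right_le_one_le)
    finally show ?thesis by (simp add: exp_minus field_simps)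
  qed
  ultimately show ?thesis by (simp add: a_def)
qed

lemma integral_exp_sign_pair_fair_bit_le:
  fixes t :: "'a \<Rightarrow> real"
  assumes "prob_space Q" and t[measurable]: "t \<in> borel_measurable Q"
    and t_le: "\<And>x. \<bar>t x\<bar> \<le> a" and "a \<le> 1"
  shows "(\<integral>z. exp (if snd z then t (fst z) else - t (fst z)) \<partial>(Q \<Otimes>\<^sub>M fair_bit)) \<le> 1 + a\<^sup>2"
proof -
  interpret Q: prob_space Q by fact
  interpret QB: pair_prob_space Q fair_bit ..
  define k where "k z = exp (if snd z then t (fst z) else - t (fst z))" for z
  have int_k: "integrable (Q \<Otimes>\<^sub>M fair_bit) k"
  proof (intro QB.P.integrable_const_bound[where B="exp 1"] AE_I2)
    show "norm (k z) \<le> exp 1" for z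
      using t_le[of "fst z"] \<open>a \<le> 1\<close> by (auto simp: k_def abs_le_iff)
    have sets_QB: "sets (Q \<Otimes>\<^sub>M fair_bit) = sets (Q \<Otimes>\<^sub>M count_space UNIV)"
      by (intro sets_pair_measure_cong) auto
    show "k \<in> borel_measurable (Q \<Otimes>\<^sub>M fair_bit)"
      unfolding k_def measurable_cong_sets[OF sets_QB refl] by measurable
  qed
  have "(\<integral>z. k z \<partial>(Q \<Otimes>\<^sub>M fair_bit)) = (\<integral>x. (\<integral>b. k (x, b) \<partial>fair_bit) \<partial>Q)"
    using int_k by (rule QB.integral_fst'[symmetric])
  also have "\<dots> \<le> (\<integral>x. 1 + a\<^sup>2 \<partial>Q)"
  proof (intro integral_mono)
    show "integrable Q (\<lambda>x. \<integral>b. k (x, b) \<partial>fair_bit)"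
      using int_k by (rule QB.integrable_fst')
    fix x
    have "(\<integral>b. k (x, b) \<partial>fair_bit) = (exp (t x) + exp (- t x)) / 2"
      by (simp add: k_def)
    also have "\<dots> \<le> 1 + (t x)\<^sup>2"
      using exp_add_exp_minus_le[of "t x"] t_le[of x] \<open>a \<le> 1\<close> by simp
    also have "\<dots> \<le> 1 + a\<^sup>2"
      using t_le[of x] by (simp add: abs_le_square_iff[symmetric])
    finally show "(\<integral>b. k (x, b) \<partial>fair_bit) \<le> 1 + a\<^sup>2" .
  qed simp
  finally show ?thesis by (simp add: k_def Q.prob_space)
qed

lemma mutual_information_fair_bit_ge_variational:
  fixes Y :: "'a \<Rightarrow> bool" and k :: "'b \<times> bool \<Rightarrow> real"
  assumes "prob_space P" and X[measurable]: "X \<in> measurable P S"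
    and Y[measurable]: "Y \<in> measurable P (count_space UNIV)"
    and Y_law: "distr P (count_space UNIV) Y = fair_bit"
    and k[measurable]: "k \<in> borel_measurable (S \<Otimes>\<^sub>M count_space UNIV)"
    and k_pos: "\<And>z. 0 < k z" and ln_k_le: "\<And>z. \<bar>ln (k z)\<bar> \<le> B"
  shows "(\<integral>\<omega>. ln (k (X \<omega>, Y \<omega>)) \<partial>P) - (\<integral>z. k z \<partial>(distr P S X \<Otimes>\<^sub>M fair_bit)) + 1
    \<le> prob_space.mutual_information P (exp 1) S (count_space UNIV) X Y"
proof -
  interpret P: prob_space P by fact
  define M where "M = distr P S X \<Otimes>\<^sub>M fair_bit"
  define N where "N = distr P (S \<Otimes>\<^sub>M count_space UNIV) (\<lambda>\<omega>. (X \<omega>, Y \<omega>))"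
  interpret PX: prob_space "distr P S X" by (rule P.prob_space_distr) simp
  interpret XB: pair_prob_space "distr P S X" fair_bit ..
  interpret N: prob_space N unfolding N_def by (rule P.prob_space_distr) simp
  have sets_M: "sets M = sets (S \<Otimes>\<^sub>M count_space UNIV)"
    unfolding M_def by (intro sets_pair_measure_cong) auto
  have k_le: "k z \<le> exp B" for z
    using ln_k_le[of z] k_pos[of z] by (metis abs_le_iff exp_le_cancel_iff exp_ln)
  have "(\<integral>z. ln (k z) \<partial>N) - (\<integral>z. k z \<partial>M) + 1 \<le> KL_divergence (exp 1) M N"
  proof (rule KL_divergence_ge_variational[where c=2])
    show "finite_measure M" unfolding M_def by (rule XB.P.finite_measure_axioms)
    show "sets N = sets M" unfolding N_def sets_M by simp
    show "emeasure N C \<le> ennreal 2 * emeasure M C" if "C \<in> sets M" for C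
      using emeasure_joint_le_twice_product[OF \<open>prob_space P\<close> X Y, of C] that sets_M
      unfolding M_def N_def by simp
    show "k \<in> borel_measurable M" using k by (simp add: measurable_cong_sets[OF sets_M refl])
    then show "integrable M k"
      unfolding M_def using k_le k_pos
      by (intro XB.P.integrable_const_bound[where B="exp B"] AE_I2) (auto simp: less_imp_le)
    show "integrable N (\<lambda>z. ln (k z))"
      unfolding N_def using ln_k_le
      by (intro N.integrable_const_bound[unfolded N_def, where B=B] AE_I2) auto
  qed (use k_pos N.prob_space_axioms in \<open>auto intro: less_imp_le\<close>)
  moreover have "(\<integral>z. ln (k z) \<partial>N) = (\<integral>\<omega>. ln (k (X \<omega>, Y \<omega>)) \<partial>P)"
    unfolding N_def by (rule integral_distr) measurable
  ultimately show ?thesis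
    unfolding P.mutual_information_def Y_law M_def N_def by simp
qed

lemma mutual_information_fair_bit_ge:
  fixes L :: "'a \<Rightarrow> real" and Y :: "'a \<Rightarrow> bool"
  assumes "prob_space P" and L[measurable]: "L \<in> borel_measurable P"
    and L01: "\<And>\<omega>. \<omega> \<in> space P \<Longrightarrow> 0 \<le> L \<omega> \<and> L \<omega> \<le> 1"
    and Y[measurable]: "Y \<in> measurable P (count_space UNIV)"
    and Y_law: "distr P (count_space UNIV) Y = fair_bit"
  shows "(\<integral>\<omega>. (L \<omega> - 1/2) * (if Y \<omega> then 1 else -1) \<partial>P)\<^sup>2
    \<le> prob_space.mutual_information P (exp 1) borel (count_space UNIV) L Y"
proof -
  interpret P: prob_space P by fact
  define D where "D = (\<integral>\<omega>. (L \<omega> - 1/2) * (if Y \<omega> then 1 else -1) \<partial>P)"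
  have "\<bar>D\<bar> \<le> (\<integral>\<omega>. \<bar>(L \<omega> - 1/2) * (if Y \<omega> then 1 else -1)\<bar> \<partial>P)"
    unfolding D_def by (rule integral_abs_bound)
  also have "\<dots> \<le> (\<integral>\<omega>. 1/2 \<partial>P)"
    by (intro integral_mono_AE' AE_I2) (auto dest!: L01 split: abs_split)
  finally have D_le: "\<bar>D\<bar> \<le> 1/2" by (simp add: P.prob_space)
  \<comment> \<open>Clipping \<open>x\<close> to \<open>[0, 1]\<close> changes nothing on the range of \<open>L\<close> but makes \<open>t\<close> bounded.\<close>
  define t where "t x = 2 * D * (max 0 (min 1 x) - 1/2)" for x
  have t_le: "\<bar>t x\<bar> \<le> \<bar>D\<bar>" for x
  proof -
    have "\<bar>max 0 (min 1 x) - 1/2\<bar> \<le> 1/2" by (auto split: abs_split)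
    then have "2 * \<bar>D\<bar> * \<bar>max 0 (min 1 x) - 1/2\<bar> \<le> 2 * \<bar>D\<bar> * (1/2)"
      by (intro mult_left_mono) auto
    then show ?thesis unfolding t_def abs_mult by simp
  qed
  define k where "k z = exp (if snd z then t (fst z) else - t (fst z))" for z :: "real \<times> bool"
  have "(\<integral>\<omega>. ln (k (L \<omega>, Y \<omega>)) \<partial>P) - (\<integral>z. k z \<partial>(distr P borel L \<Otimes>\<^sub>M fair_bit)) + 1
      \<le> P.mutual_information (exp 1) borel (count_space UNIV) L Y"
  proof (rule mutual_information_fair_bit_ge_variational[OF \<open>prob_space P\<close> L Y Y_law])
    show "k \<in> borel_measurable (borel \<Otimes>\<^sub>M count_space UNIV)" unfolding k_def t_def by measurable
    show "0 < k z" for z by (simp add: k_def)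
    show "\<bar>ln (k z)\<bar> \<le> 1/2" for z using t_le[of "fst z"] D_le by (simp add: k_def)
  qed
  moreover have "(\<integral>\<omega>. ln (k (L \<omega>, Y \<omega>)) \<partial>P) = 2 * D * D"
  proof -
    have "(\<integral>\<omega>. ln (k (L \<omega>, Y \<omega>)) \<partial>P) = (\<integral>\<omega>. 2 * D * ((L \<omega> - 1/2) * (if Y \<omega> then 1 else -1)) \<partial>P)"
      using L01 by (intro Bochner_Integration.integral_cong) (auto simp: k_def t_def algebra_simps)
    then show ?thesis by (simp add: D_def)
  qed
  moreover have "(\<integral>z. k z \<partial>(distr P borel L \<Otimes>\<^sub>M fair_bit)) \<le> 1 + \<bar>D\<bar>\<^sup>2"
    unfolding k_def using D_le t_le
    by (intro integral_exp_sign_pair_fair_bit_le P.prob_space_distr) (auto simp: t_def)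
  ultimately show ?thesis unfolding D_def[symmetric] by (simp add: power2_eq_square)
qed

lemma mutual_information_fair_bit_le_of_function:
  fixes Y :: "'a \<Rightarrow> bool" and h :: "'b \<Rightarrow> real"
  assumes "prob_space P" and V[measurable]: "V \<in> measurable P S"
    and Y[measurable]: "Y \<in> measurable P (count_space UNIV)"
    and Y_law: "distr P (count_space UNIV) Y = fair_bit"
    and h[measurable]: "h \<in> borel_measurable S"
  shows "prob_space.mutual_information P (exp 1) borel (count_space UNIV) (\<lambda>\<omega>. h (V \<omega>)) Y
    \<le> prob_space.mutual_information P (exp 1) (count_space UNIV) S Y V"
proof -
  interpret P: prob_space P by fact
  define PV where "PV = distr P S V"
  define M where "M = fair_bit \<Otimes>\<^sub>M PV"
  define N where "N = distr P (count_space UNIV \<Otimes>\<^sub>M S) (\<lambda>\<omega>. (Y \<omega>, V \<omega>))"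
  define H where "H z = (h (snd z), fst z)" for z :: "bool \<times> 'b"
  interpret PV: prob_space PV unfolding PV_def by (rule P.prob_space_distr) simp
  interpret BV: pair_prob_space fair_bit PV ..
  interpret N: prob_space N unfolding N_def by (rule P.prob_space_distr) simp
  have sets_M: "sets M = sets (count_space UNIV \<Otimes>\<^sub>M S)"
    unfolding M_def PV_def by (intro sets_pair_measure_cong) auto
  have H[measurable]: "H \<in> measurable (count_space UNIV \<Otimes>\<^sub>M S) (borel \<Otimes>\<^sub>M count_space UNIV)"
    unfolding H_def by measurable
  have "distr M (borel \<Otimes>\<^sub>M count_space UNIV) H
      = distr (distr (PV \<Otimes>\<^sub>M fair_bit) (fair_bit \<Otimes>\<^sub>M PV) (\<lambda>(x, y). (y, x)))
          (borel \<Otimes>\<^sub>M count_space UNIV) H"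
    unfolding M_def by (subst BV.distr_pair_swap) simp
  also have "\<dots> = distr (PV \<Otimes>\<^sub>M fair_bit) (borel \<Otimes>\<^sub>M count_space UNIV) (\<lambda>(v, b). (h v, b))"
  proof (subst distr_distr)
    show "H \<in> measurable (fair_bit \<Otimes>\<^sub>M PV) (borel \<Otimes>\<^sub>M count_space UNIV)"
      using H unfolding PV_def
      by (simp add: measurable_cong_sets[OF sets_pair_measure_cong[OF _ sets_distr] refl])
  qed (auto simp: comp_def H_def split_beta')
  also have "\<dots> = distr PV borel h \<Otimes>\<^sub>M distr fair_bit (count_space UNIV) (\<lambda>b. b)"
    by (subst pair_measure_distr)
      (auto simp: PV_def distr_id2 intro: prob_space_imp_sigma_finite prob_space_measure_pmf)
  finally have M_H: "distr M (borel \<Otimes>\<^sub>M count_space UNIV) H = distr P borel (\<lambda>\<omega>. h (V \<omega>)) \<Otimes>\<^sub>M fair_bit"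
    unfolding PV_def by (simp add: distr_distr comp_def distr_id2)
  have N_H: "distr N (borel \<Otimes>\<^sub>M count_space UNIV) H
      = distr P (borel \<Otimes>\<^sub>M count_space UNIV) (\<lambda>\<omega>. (h (V \<omega>), Y \<omega>))"
    unfolding N_def by (subst distr_distr) (auto simp: comp_def H_def)
  have "KL_divergence (exp 1) (distr M (borel \<Otimes>\<^sub>M count_space UNIV) H) (distr N (borel \<Otimes>\<^sub>M count_space UNIV) H)
      \<le> KL_divergence (exp 1) M N"
  proof (rule KL_divergence_distr_le[where c=2])
    show "finite_measure M" unfolding M_def by (rule BV.P.finite_measure_axioms)
    show "sets N = sets M" unfolding N_def sets_M by simp
    show "emeasure N C \<le> ennreal 2 * emeasure M C" if "C \<in> sets M" for C
      using emeasure_joint_swap_le_twice_product[OF \<open>prob_space P\<close> V Y, of C] that sets_M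
      unfolding M_def N_def PV_def by simp
    show "H \<in> measurable M (borel \<Otimes>\<^sub>M count_space UNIV)"
      using H by (simp add: measurable_cong_sets[OF sets_M refl])
  qed (simp_all add: N.prob_space_axioms)
  then show ?thesis
    unfolding P.mutual_information_def Y_law M_H N_H unfolding M_def N_def PV_def .
qed

lemma mutual_information_eq_0_if_joint_eq_product:
  assumes "prob_space P" and Y[measurable]: "Y \<in> measurable P S" and Z[measurable]: "Z \<in> measurable P T"
    and joint: "distr P (S \<Otimes>\<^sub>M T) (\<lambda>\<omega>. (Y \<omega>, Z \<omega>)) = distr P S Y \<Otimes>\<^sub>M distr P T Z"
  shows "prob_space.mutual_information P b S T Y Z = 0"
proof -
  interpret P: prob_space P by fact
  interpret A: prob_space "distr P S Y" by (rule P.prob_space_distr) simp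
  interpret B: prob_space "distr P T Z" by (rule P.prob_space_distr) simp
  interpret AB: pair_prob_space "distr P S Y" "distr P T Z" ..
  show ?thesis unfolding P.mutual_information_def joint by (rule AB.KL_same_eq_0)
qed

section \<open>The supersample experiment\<close>

lemma measurable_integral_kernel:
  fixes f :: "'a \<Rightarrow> 'b \<Rightarrow> real"
  assumes f: "(\<lambda>(x, y). f x y) \<in> borel_measurable (M \<Otimes>\<^sub>M N)"
    and K: "K \<in> measurable M (subprob_algebra N)"
  shows "(\<lambda>x. \<integral>y. f x y \<partial>K x) \<in> borel_measurable M"
proof -
  define K' where "K' x = distr (K x) (M \<Otimes>\<^sub>M N) (\<lambda>y. (x, y))" for x
  have "K' \<in> measurable M (subprob_algebra (M \<Otimes>\<^sub>M N))"
    unfolding K'_def by (rule measurable_distr2[OF _ K]) measurable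
  then have "(\<lambda>x. \<integral>z. (\<lambda>(x, y). f x y) z \<partial>K' x) \<in> borel_measurable M"
    using f by measurable
  moreover have "(\<integral>z. (\<lambda>(x, y). f x y) z \<partial>K' x) = (\<integral>y. f x y \<partial>K x)" if "x \<in> space M" for x
  proof -
    have "(\<lambda>y. (x, y)) \<in> measurable (K x) (M \<Otimes>\<^sub>M N)"
      using measurable_Pair1'[OF that, of N] by (simp add: measurable_cong_sets[OF sets_kernel[OF K that] refl])
    then show ?thesis unfolding K'_def using f by (simp add: integral_distr)
  qed
  ultimately show ?thesis by (simp cong: measurable_cong)
qed

locale supersample_setting =
  fixes n :: nat
    and \<mu> :: "('x \<times> 'y) measure"
    and MX :: "'x measure" and MY :: "'y measure"
    and MW :: "'w measure" and MP :: "'p measure"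
    and A :: "(nat \<Rightarrow> 'x \<times> 'y) \<Rightarrow> 'w measure"
    and f :: "'w \<Rightarrow> 'x \<Rightarrow> 'p"
    and lt :: "'p \<Rightarrow> 'y \<Rightarrow> real"
  assumes n_pos: "0 < n"
    and mu_prob: "prob_space \<mu>"
    and mu_sets: "sets \<mu> = sets (MX \<Otimes>\<^sub>M MY)"
    and f_meas: "(\<lambda>(w, x). f w x) \<in> measurable (MW \<Otimes>\<^sub>M MX) MP"
    and lt_meas: "(\<lambda>(p, y). lt p y) \<in> borel_measurable (MP \<Otimes>\<^sub>M MY)"
    and A_kernel[measurable]: "A \<in> measurable (PiM {..<n} (\<lambda>_. \<mu>)) (subprob_algebra MW)"
    and A_prob: "\<forall>s \<in> space (PiM {..<n} (\<lambda>_. \<mu>)). prob_space (A s)"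
    and loss_01: "\<forall>w \<in> space MW. \<forall>z \<in> space \<mu>. 0 \<le> loss f lt w z \<and> loss f lt w z \<le> 1"
begin

abbreviation "PS \<equiv> PiM {..<n} (\<lambda>_. \<mu>)"
abbreviation "Zs \<equiv> zt_space n \<mu>"
abbreviation "Us \<equiv> u_space n"
abbreviation "\<Omega> \<equiv> Zs \<Otimes>\<^sub>M Us \<Otimes>\<^sub>M MW"
abbreviation "SS \<equiv> supersample n \<mu> MW A"

lemma prob_space_PS: "prob_space PS"
  by (intro prob_space_PiM mu_prob)

lemma prob_space_Zs: "prob_space Zs"
  unfolding zt_space_def by (intro prob_space_PiM mu_prob)

lemma prob_space_Us: "prob_space Us"
  unfolding u_space_def by (intro prob_space_PiM prob_space_measure_pmf)

lemma pair_prob_space_Zs_Us: "pair_prob_space Zs Us"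
proof -
  interpret Zs: prob_space Zs by (rule prob_space_Zs)
  interpret Us: prob_space Us by (rule prob_space_Us)
  show ?thesis by unfold_locales
qed

lemma measurable_prediction[measurable]:
  assumes "g \<in> measurable N MW" "h \<in> measurable N MX"
  shows "(\<lambda>x. f (g x) (h x)) \<in> measurable N MP"
  using measurable_compose[OF _ f_meas, of "\<lambda>x. (g x, h x)"] assms by simp

lemma measurable_lt[measurable]:
  assumes "g \<in> measurable N MP" "h \<in> measurable N MY"
  shows "(\<lambda>x. lt (g x) (h x)) \<in> borel_measurable N"
  using measurable_compose[OF _ lt_meas, of "\<lambda>x. (g x, h x)"] assms by simp

lemma measurable_loss[measurable]:
  assumes [measurable]: "g \<in> measurable N MW" "h \<in> measurable N \<mu>"
  shows "(\<lambda>x. loss f lt (g x) (h x)) \<in> borel_measurable N"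
proof -
  have [measurable]: "h \<in> measurable N (MX \<Otimes>\<^sub>M MY)"
    using assms(2) by (simp add: measurable_cong_sets[OF refl mu_sets])
  show ?thesis unfolding loss_def by measurable
qed

lemma measurable_Zs_component[measurable]: "i < n \<Longrightarrow> (\<lambda>zt. zt (i, b)) \<in> measurable Zs \<mu>"
  unfolding zt_space_def by (rule measurable_component_singleton) auto

lemma measurable_Us_component[measurable]:
  "i < n \<Longrightarrow> (\<lambda>u. u i) \<in> measurable Us (count_space UNIV)"
  unfolding u_space_def
  by (subst measurable_cong_sets[OF refl sets_measure_pmf_count_space[symmetric]])
    (rule measurable_component_singleton, auto)

lemma distr_Us_component: "i < n \<Longrightarrow> distr Us (count_space UNIV) (\<lambda>u. u i) = fair_bit"
  unfolding u_space_def
  by (subst distr_cong[OF refl sets_measure_pmf_count_space[symmetric]])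
    (auto intro!: distr_PiM_component prob_space_measure_pmf)

lemma measurable_select[measurable]: "(\<lambda>x. select n (fst x) (snd x)) \<in> measurable (Zs \<Otimes>\<^sub>M Us) PS"
proof -
  have "(\<lambda>x. \<lambda>i\<in>{..<n}. if snd x i then fst x (i, True) else fst x (i, False)) \<in> measurable (Zs \<Otimes>\<^sub>M Us) PS"
    by (intro measurable_restrict) measurable
  then show ?thesis
    by (rule measurable_cong[THEN iffD1, rotated]) (auto simp: select_def intro!: restrict_ext)
qed

lemma select_in_space: "zt \<in> space Zs \<Longrightarrow> select n zt u \<in> space PS"
  unfolding select_def zt_space_def by (auto simp: space_PiM PiE_iff)

lemma space_PS_component: "s \<in> space PS \<Longrightarrow> i < n \<Longrightarrow> s i \<in> space \<mu>"
  by (auto simp: space_PiM)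

lemma space_Zs_component: "zt \<in> space Zs \<Longrightarrow> i < n \<Longrightarrow> zt (i, b) \<in> space \<mu>"
  by (auto simp: space_PiM zt_space_def)

lemma sets_A: "s \<in> space PS \<Longrightarrow> sets (A s) = sets MW"
  using A_kernel by (rule subprob_measurableD)

lemma space_A: "s \<in> space PS \<Longrightarrow> space (A s) = space MW"
  using A_kernel by (rule subprob_measurableD)

definition learner_kernel :: "(nat \<times> bool \<Rightarrow> 'x \<times> 'y) \<times> (nat \<Rightarrow> bool)
    \<Rightarrow> ((nat \<times> bool \<Rightarrow> 'x \<times> 'y) \<times> (nat \<Rightarrow> bool) \<times> 'w) measure" where
  "learner_kernel x = distr (A (select n (fst x) (snd x))) \<Omega> (\<lambda>w. (fst x, snd x, w))"

lemma measurable_learner_kernel[measurable]: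
  "learner_kernel \<in> measurable (Zs \<Otimes>\<^sub>M Us) (subprob_algebra \<Omega>)"
  unfolding learner_kernel_def[abs_def] by (rule measurable_distr2) measurable

lemma prob_space_learner_kernel:
  assumes "x \<in> space (Zs \<Otimes>\<^sub>M Us)"
  shows "prob_space (learner_kernel x)"
proof -
  have s: "select n (fst x) (snd x) \<in> space PS"
    using assms by (auto intro: select_in_space simp: space_pair_measure)
  interpret prob_space "A (select n (fst x) (snd x))" using A_prob s by blast
  show ?thesis unfolding learner_kernel_def
    by (rule prob_space_distr) (use assms in \<open>simp add: space_pair_measure measurable_cong_sets[OF sets_A[OF s] refl]\<close>)
qed

lemma supersample_eq_bind: "SS = (Zs \<Otimes>\<^sub>M Us) \<bind> learner_kernel"
proof -
  interpret ZU: pair_prob_space Zs Us by (rule pair_prob_space_Zs_Us)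
  note return_measurable[measurable]
  have "(Zs \<Otimes>\<^sub>M Us) \<bind> learner_kernel
      = Zs \<bind> (\<lambda>zt. (Us \<bind> (\<lambda>u. return (Zs \<Otimes>\<^sub>M Us) (zt, u))) \<bind> learner_kernel)"
    by (subst ZU.pair_measure_eq_bind) (rule bind_assoc; measurable)
  also have "\<dots> = Zs \<bind> (\<lambda>zt. Us \<bind> (\<lambda>u. return (Zs \<Otimes>\<^sub>M Us) (zt, u) \<bind> learner_kernel))"
    by (intro bind_cong refl bind_assoc) measurable
  also have "\<dots> = SS"
    unfolding supersample_def
  proof (intro bind_cong refl)
    fix zt u assume zt: "zt \<in> space Zs" and u: "u \<in> space Us"
    have s: "select n zt u \<in> space PS" using zt by (rule select_in_space)
    interpret prob_space "A (select n zt u)" using A_prob s by blast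
    have "(\<lambda>w. (zt, u, w)) \<in> measurable (A (select n zt u)) \<Omega>"
      using zt u by (simp add: measurable_cong_sets[OF sets_A[OF s] refl])
    then show "return (Zs \<Otimes>\<^sub>M Us) (zt, u) \<bind> learner_kernel
        = A (select n zt u) \<bind> (\<lambda>w. return \<Omega> (zt, u, w))"
      using zt u not_empty
      by (simp add: bind_return[OF measurable_learner_kernel] space_pair_measure
          learner_kernel_def bind_return_distr')
  qed
  finally show ?thesis ..
qed

lemma prob_space_supersample: "prob_space SS"
proof -
  interpret ZU: pair_prob_space Zs Us by (rule pair_prob_space_Zs_Us)
  show ?thesis unfolding supersample_eq_bind
    by (rule ZU.P.prob_space_bind[OF AE_I2 measurable_learner_kernel]) (rule prob_space_learner_kernel)
qed

lemma sets_supersample: "sets SS = sets \<Omega>"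
proof -
  interpret ZU: pair_prob_space Zs Us by (rule pair_prob_space_Zs_Us)
  show ?thesis unfolding supersample_eq_bind
    by (rule sets_bind[OF sets_kernel[OF measurable_learner_kernel] ZU.P.not_empty])
qed

lemma measurable_supersample_iff: "measurable SS N = measurable \<Omega> N"
  using sets_supersample by (rule measurable_cong_sets) simp

lemma integral_supersample:
  fixes g :: "_ \<Rightarrow> real"
  assumes g[measurable]: "g \<in> borel_measurable \<Omega>" and g_le: "\<And>x. x \<in> space \<Omega> \<Longrightarrow> \<bar>g x\<bar> \<le> B"
  shows "integral\<^sup>L SS g = (\<integral>x. (\<integral>w. g (fst x, snd x, w) \<partial>A (select n (fst x) (snd x))) \<partial>(Zs \<Otimes>\<^sub>M Us))"
proof -
  interpret ZU: pair_prob_space Zs Us by (rule pair_prob_space_Zs_Us)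
  have "integral\<^sup>L SS g = (\<integral>x. integral\<^sup>L (learner_kernel x) g \<partial>(Zs \<Otimes>\<^sub>M Us))"
    unfolding supersample_eq_bind
  proof (rule integral_bind[OF g g_le measurable_learner_kernel ZU.P.finite_measure_axioms])
    show "AE x in Zs \<Otimes>\<^sub>M Us. emeasure (learner_kernel x) (space (learner_kernel x)) \<le> ennreal 1"
      by (intro AE_I2) (simp add: prob_space.emeasure_space_1 prob_space_learner_kernel)
  qed
  also have "\<dots> = (\<integral>x. (\<integral>w. g (fst x, snd x, w) \<partial>A (select n (fst x) (snd x))) \<partial>(Zs \<Otimes>\<^sub>M Us))"
  proof (intro Bochner_Integration.integral_cong refl)
    fix x assume x: "x \<in> space (Zs \<Otimes>\<^sub>M Us)"
    then have s: "select n (fst x) (snd x) \<in> space PS"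
      by (auto intro: select_in_space simp: space_pair_measure)
    have "(\<lambda>w. (fst x, snd x, w)) \<in> measurable (A (select n (fst x) (snd x))) \<Omega>"
      using x by (simp add: measurable_cong_sets[OF sets_A[OF s] refl] space_pair_measure)
    then show "integral\<^sup>L (learner_kernel x) g = (\<integral>w. g (fst x, snd x, w) \<partial>A (select n (fst x) (snd x)))"
      unfolding learner_kernel_def by (simp add: integral_distr)
  qed
  finally show ?thesis .
qed

lemma distr_supersample:
  assumes \<psi>[measurable]: "\<psi> \<in> measurable (Zs \<Otimes>\<^sub>M Us) R" and \<phi>: "\<And>zt u w. \<phi> (zt, u, w) = \<psi> (zt, u)"
  shows "distr SS R \<phi> = distr (Zs \<Otimes>\<^sub>M Us) R \<psi>"
proof -
  interpret ZU: pair_prob_space Zs Us by (rule pair_prob_space_Zs_Us)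
  have \<phi>_eq: "\<phi> = (\<lambda>\<omega>. \<psi> (fst \<omega>, fst (snd \<omega>)))" using \<phi> by (auto simp: fun_eq_iff)
  have [measurable]: "\<phi> \<in> measurable \<Omega> R" unfolding \<phi>_eq by measurable
  have "distr SS R \<phi> = (Zs \<Otimes>\<^sub>M Us) \<bind> (\<lambda>x. distr (learner_kernel x) R \<phi>)"
    unfolding supersample_eq_bind using ZU.P.not_empty
    by (intro distr_bind[OF measurable_learner_kernel]) auto
  also have "\<dots> = (Zs \<Otimes>\<^sub>M Us) \<bind> (\<lambda>x. return R (\<psi> x))"
  proof (intro bind_cong refl)
    fix x assume x: "x \<in> space (Zs \<Otimes>\<^sub>M Us)"
    then have s: "select n (fst x) (snd x) \<in> space PS"
      by (auto intro: select_in_space simp: space_pair_measure)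
    interpret prob_space "A (select n (fst x) (snd x))" using A_prob s by blast
    have "(\<lambda>w. (fst x, snd x, w)) \<in> measurable (A (select n (fst x) (snd x))) \<Omega>"
      using x by (simp add: measurable_cong_sets[OF sets_A[OF s] refl] space_pair_measure)
    then have "distr (learner_kernel x) R \<phi> = distr (A (select n (fst x) (snd x))) R (\<lambda>w. \<psi> x)"
      unfolding learner_kernel_def by (subst distr_distr) (auto simp: comp_def \<phi>)
    also have "\<dots> = return R (\<psi> x)"
      using measurable_space[OF \<psi> x] by simp
    finally show "distr (learner_kernel x) R \<phi> = return R (\<psi> x)" .
  qed
  also have "\<dots> = distr (Zs \<Otimes>\<^sub>M Us) R \<psi>"
    using ZU.P.not_empty by (rule bind_return_distr') simp
  finally show ?thesis .
qed

lemma distr_supersample_bit_Zs: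
  assumes "i < n"
  shows "distr SS (count_space UNIV \<Otimes>\<^sub>M Zs) (\<lambda>(zt, u, w). (u i, zt)) = fair_bit \<Otimes>\<^sub>M Zs"
proof -
  interpret ZU: pair_prob_space Zs Us by (rule pair_prob_space_Zs_Us)
  have "distr SS (count_space UNIV \<Otimes>\<^sub>M Zs) (\<lambda>(zt, u, w). (u i, zt))
      = distr (Zs \<Otimes>\<^sub>M Us) (count_space UNIV \<Otimes>\<^sub>M Zs) (\<lambda>(zt, u). (u i, zt))"
    using assms by (intro distr_supersample) auto
  also have "\<dots> = distr (distr (Us \<Otimes>\<^sub>M Zs) (Zs \<Otimes>\<^sub>M Us) (\<lambda>(u, zt). (zt, u)))
      (count_space UNIV \<Otimes>\<^sub>M Zs) (\<lambda>(zt, u). (u i, zt))"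
    by (subst ZU.distr_pair_swap) (simp add: split_beta')
  also have "\<dots> = distr (Us \<Otimes>\<^sub>M Zs) (count_space UNIV \<Otimes>\<^sub>M Zs) (\<lambda>(u, zt). (u i, zt))"
    using assms by (subst distr_distr) (auto simp: comp_def split_beta')
  also have "\<dots> = distr Us (count_space UNIV) (\<lambda>u. u i) \<Otimes>\<^sub>M distr Zs Zs (\<lambda>zt. zt)"
    using assms by (subst pair_measure_distr) (auto intro: prob_space_imp_sigma_finite prob_space_Zs simp: distr_id2)
  finally show ?thesis using assms by (simp add: distr_Us_component distr_id2)
qed

lemma distr_supersample_bit:
  assumes "i < n"
  shows "distr SS (count_space UNIV) (\<lambda>(zt, u, w). u i) = fair_bit"
proof -
  interpret Zs: prob_space Zs by (rule prob_space_Zs)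
  have "distr SS (count_space UNIV) (\<lambda>(zt, u, w). u i)
      = distr (distr SS (count_space UNIV \<Otimes>\<^sub>M Zs) (\<lambda>(zt, u, w). (u i, zt))) (count_space UNIV) fst"
    using assms by (subst distr_distr) (auto simp: measurable_supersample_iff comp_def split_beta')
  also have "\<dots> = distr (fair_bit \<Otimes>\<^sub>M Zs) fair_bit fst"
    unfolding distr_supersample_bit_Zs[OF assms] by (rule distr_cong) auto
  finally show ?thesis by (simp add: Zs.distr_pair_fst)
qed

lemma distr_supersample_Zs: "distr SS Zs (\<lambda>(zt, u, w). zt) = Zs"
proof -
  interpret Us: prob_space Us by (rule prob_space_Us)
  have "distr SS Zs (\<lambda>(zt, u, w). zt) = distr (Zs \<Otimes>\<^sub>M Us) Zs fst"
    by (intro distr_supersample) auto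
  then show ?thesis by (simp add: Us.distr_pair_fst)
qed

definition expected_loss :: "(nat \<Rightarrow> 'x \<times> 'y) \<Rightarrow> 'x \<times> 'y \<Rightarrow> real" where
  "expected_loss s z = (\<integral>w. loss f lt w z \<partial>A s)"

lemma measurable_expected_loss[measurable]:
  assumes "a \<in> measurable N PS" "b \<in> measurable N \<mu>"
  shows "(\<lambda>x. expected_loss (a x) (b x)) \<in> borel_measurable N"
proof -
  have "(\<lambda>x. expected_loss (fst x) (snd x)) \<in> borel_measurable (PS \<Otimes>\<^sub>M \<mu>)"
    unfolding expected_loss_def by (rule measurable_integral_kernel[where N=MW]) measurable
  from measurable_compose[OF measurable_Pair[OF assms] this] show ?thesis by simp
qed

lemma loss_bounds: "w \<in> space MW \<Longrightarrow> z \<in> space \<mu> \<Longrightarrow> 0 \<le> loss f lt w z \<and> loss f lt w z \<le> 1"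
  using loss_01 by blast

lemma integrable_loss:
  assumes s: "s \<in> space PS" and z: "z \<in> space \<mu>"
  shows "integrable (A s) (\<lambda>w. loss f lt w z)"
proof -
  interpret prob_space "A s" using A_prob s by blast
  show ?thesis
    by (intro integrable_const_bound[where B=1] AE_I2)
      (use loss_bounds z in \<open>auto simp: space_A[OF s] measurable_cong_sets[OF sets_A[OF s] refl]\<close>)
qed

lemma expected_loss_bounds:
  assumes s: "s \<in> space PS" and z: "z \<in> space \<mu>"
  shows "0 \<le> expected_loss s z" "expected_loss s z \<le> 1"
proof -
  interpret prob_space "A s" using A_prob s by blast
  show "0 \<le> expected_loss s z" unfolding expected_loss_def
    using loss_bounds z by (intro integral_nonneg_AE AE_I2) (auto simp: space_A[OF s])
  have "expected_loss s z \<le> (\<integral>w. 1 \<partial>A s)" unfolding expected_loss_def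
    using loss_bounds z integrable_loss[OF s z] by (intro integral_mono) (auto simp: space_A[OF s])
  then show "expected_loss s z \<le> 1" by (simp add: prob_space)
qed

lemma abs_expected_loss_le:
  assumes "s \<in> space PS" "z \<in> space \<mu>"
  shows "\<bar>expected_loss s z\<bar> \<le> 1"
  using expected_loss_bounds[OF assms] by (simp add: abs_le_iff)

definition train_loss :: "nat \<Rightarrow> real" where
  "train_loss i = (\<integral>s. expected_loss s (s i) \<partial>PS)"

definition test_loss :: real where
  "test_loss = (\<integral>s. (\<integral>z. expected_loss s z \<partial>\<mu>) \<partial>PS)"

definition column_loss :: "nat \<Rightarrow> (nat \<Rightarrow> bool) \<Rightarrow> real" where
  "column_loss i u = (\<integral>zt. expected_loss (select n zt u) (zt (i, False)) \<partial>Zs)"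

lemma measurable_select_fixed[measurable]: "(\<lambda>zt. select n zt u) \<in> measurable Zs PS"
  unfolding select_def by (intro measurable_restrict) auto

lemma column_loss_selected:
  assumes i: "i < n" and "\<not> u i"
  shows "column_loss i u = train_loss i"
proof -
  have distr_select: "distr Zs PS (\<lambda>zt. select n zt u) = PS"
    using distr_PiM_reindex[of "{..<n} \<times> UNIV" "\<lambda>_. \<mu>" "\<lambda>k. (k, u k)" "{..<n}"] mu_prob
    by (auto simp: inj_on_def zt_space_def select_def)
  have "column_loss i u = (\<integral>zt. expected_loss (select n zt u) (select n zt u i) \<partial>Zs)"
    unfolding column_loss_def using assms by (intro Bochner_Integration.integral_cong) (auto simp: select_def)
  also have "\<dots> = (\<integral>s. expected_loss s (s i) \<partial>distr Zs PS (\<lambda>zt. select n zt u))"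
    using i by (subst integral_distr) auto
  finally show ?thesis unfolding distr_select train_loss_def .
qed

lemma distr_select_unselected:
  assumes i: "i < n" and "u i"
  shows "distr Zs (PS \<Otimes>\<^sub>M \<mu>) (\<lambda>zt. (select n zt u, zt (i, False))) = PS \<Otimes>\<^sub>M \<mu>"
proof -
  interpret \<mu>: prob_space \<mu> by (rule mu_prob)
  interpret PS: prob_space PS by (rule prob_space_PS)
  interpret PS\<mu>: pair_prob_space PS \<mu> ..
  let ?\<Pi> = "PiM {..<Suc n} (\<lambda>_. \<mu>)"
  \<comment> \<open>Since \<open>u i\<close>, the index \<open>(i, False)\<close> is not selected, so \<open>g\<close> is injective.\<close>
  define g where "g k = (if k < n then (k, u k) else (i, False))" for k
  define reindex where "reindex zt = (\<lambda>k\<in>{..<Suc n}. zt (g k))" for zt :: "nat \<times> bool \<Rightarrow> 'x \<times> 'y"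
  define split_last where "split_last X = (restrict X {..<n}, X n)" for X :: "nat \<Rightarrow> 'x \<times> 'y"
  have [measurable]: "reindex \<in> measurable Zs ?\<Pi>"
    unfolding reindex_def g_def using i by (intro measurable_restrict) auto
  have [measurable]: "split_last \<in> measurable ?\<Pi> (PS \<Otimes>\<^sub>M \<mu>)"
    unfolding split_last_def by (intro measurable_Pair measurable_restrict_subset measurable_component_singleton) auto
  have [measurable]: "(\<lambda>(x, X). X(n := x)) \<in> measurable (\<mu> \<Otimes>\<^sub>M PS) ?\<Pi>"
    unfolding lessThan_Suc by measurable
  have "distr Zs (PS \<Otimes>\<^sub>M \<mu>) (\<lambda>zt. (select n zt u, zt (i, False))) = distr (distr Zs ?\<Pi> reindex) (PS \<Otimes>\<^sub>M \<mu>) split_last"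
    by (subst distr_distr)
      (auto intro!: distr_cong simp: split_last_def reindex_def g_def select_def fun_eq_iff)
  also have "distr Zs ?\<Pi> reindex = ?\<Pi>"
  proof -
    have "inj_on g {..<Suc n}" using \<open>u i\<close> by (auto simp: inj_on_def g_def split: if_splits)
    moreover have "g \<in> {..<Suc n} \<rightarrow> {..<n} \<times> UNIV" using i by (auto simp: g_def)
    ultimately show ?thesis
      using distr_PiM_reindex[of "{..<n} \<times> UNIV" "\<lambda>_. \<mu>" g "{..<Suc n}"] mu_prob
      unfolding zt_space_def reindex_def[abs_def] by simp
  qed
  also have "?\<Pi> = distr (\<mu> \<Otimes>\<^sub>M PS) ?\<Pi> (\<lambda>(x, X). X(n := x))"
    using distr_pair_PiM_eq_PiM[of "{..<n}" "\<lambda>_. \<mu>" n] mu_prob by (simp add: lessThan_Suc)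
  also have "distr \<dots> (PS \<Otimes>\<^sub>M \<mu>) split_last = distr (\<mu> \<Otimes>\<^sub>M PS) (PS \<Otimes>\<^sub>M \<mu>) (\<lambda>(x, X). (X, x))"
    by (subst distr_distr)
      (auto intro!: distr_cong simp: split_last_def space_pair_measure space_PiM PiE_def extensional_def
        restrict_def fun_eq_iff)
  also have "\<dots> = PS \<Otimes>\<^sub>M \<mu>"
    by (rule PS\<mu>.distr_pair_swap[symmetric])
  finally show ?thesis .
qed

lemma column_loss_unselected:
  assumes "i < n" "u i"
  shows "column_loss i u = test_loss"
proof -
  interpret \<mu>: prob_space \<mu> by (rule mu_prob)
  interpret PS: prob_space PS by (rule prob_space_PS)
  interpret PS\<mu>: pair_prob_space PS \<mu> ..
  have "column_loss i u
      = (\<integral>x. expected_loss (fst x) (snd x) \<partial>distr Zs (PS \<Otimes>\<^sub>M \<mu>) (\<lambda>zt. (select n zt u, zt (i, False))))"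
    unfolding column_loss_def using assms by (subst integral_distr) auto
  also have "\<dots> = (\<integral>x. expected_loss (fst x) (snd x) \<partial>(PS \<Otimes>\<^sub>M \<mu>))"
    using distr_select_unselected[of i u] assms by simp
  also have "\<dots> = test_loss"
  proof -
    have "integrable (PS \<Otimes>\<^sub>M \<mu>) (\<lambda>x. expected_loss (fst x) (snd x))"
      by (intro PS\<mu>.P.integrable_const_bound[where B=1] AE_I2)
        (auto simp: space_pair_measure abs_expected_loss_le)
    from PS\<mu>.integral_fst'[OF this] show ?thesis unfolding test_loss_def by simp
  qed
  finally show ?thesis .
qed

lemma pop_risk_eq_test_loss: "pop_risk n \<mu> A f lt = test_loss"
  unfolding pop_risk_def test_loss_def
proof (intro Bochner_Integration.integral_cong refl)
  fix s assume s: "s \<in> space PS"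
  interpret \<mu>: prob_space \<mu> by (rule mu_prob)
  interpret As: prob_space "A s" using A_prob s by blast
  interpret As\<mu>: pair_prob_space "A s" \<mu> ..
  have "integrable (A s \<Otimes>\<^sub>M \<mu>) (\<lambda>(w, z). loss f lt w z)"
  proof (intro As\<mu>.P.integrable_const_bound[where B=1] AE_I2)
    have "(\<lambda>(w, z). loss f lt w z) \<in> borel_measurable (MW \<Otimes>\<^sub>M \<mu>)" by measurable
    then show "(\<lambda>(w, z). loss f lt w z) \<in> borel_measurable (A s \<Otimes>\<^sub>M \<mu>)"
      by (simp add: measurable_cong_sets[OF sets_pair_measure_cong[OF sets_A[OF s] refl] refl])
  qed (auto dest!: loss_bounds simp: space_pair_measure space_A[OF s])
  then show "(\<integral>w. (\<integral>z. loss f lt w z \<partial>\<mu>) \<partial>A s) = (\<integral>z. expected_loss s z \<partial>\<mu>)"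
    unfolding expected_loss_def by (rule As\<mu>.Fubini_integral[symmetric])
qed

lemma emp_risk_eq_train_loss: "emp_risk n \<mu> A f lt = (\<Sum>i<n. train_loss i) / n"
proof -
  interpret PS: prob_space PS by (rule prob_space_PS)
  have "emp_risk n \<mu> A f lt = (\<integral>s. (\<Sum>i<n. expected_loss s (s i)) / n \<partial>PS)"
    unfolding emp_risk_def
  proof (intro Bochner_Integration.integral_cong refl)
    fix s assume s: "s \<in> space PS"
    have "(\<integral>w. (\<Sum>i<n. loss f lt w (s i)) \<partial>A s) = (\<Sum>i<n. expected_loss s (s i))"
      unfolding expected_loss_def
      by (rule Bochner_Integration.integral_sum) (use integrable_loss[OF s space_PS_component[OF s]] in auto)
    then show "(\<integral>w. 1 / real n * (\<Sum>i<n. loss f lt w (s i)) \<partial>A s) = (\<Sum>i<n. expected_loss s (s i)) / n"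
      by simp
  qed
  also have "\<dots> = (\<Sum>i<n. train_loss i) / n"
  proof -
    have "integrable PS (\<lambda>s. expected_loss s (s i))" if i: "i < n" for i
      using i abs_expected_loss_le[OF _ space_PS_component]
      by (intro PS.integrable_const_bound[where B=1] AE_I2 measurable_expected_loss
          measurable_ident_sets refl measurable_component_singleton) auto
    then have "(\<integral>s. (\<Sum>i<n. expected_loss s (s i)) \<partial>PS) = (\<Sum>i<n. train_loss i)"
      unfolding train_loss_def by (intro Bochner_Integration.integral_sum) auto
    then show ?thesis by simp
  qed
  finally show ?thesis .
qed

abbreviation loss_plus :: "nat \<Rightarrow> (nat \<times> bool \<Rightarrow> 'x \<times> 'y) \<times> (nat \<Rightarrow> bool) \<times> 'w \<Rightarrow> real" where
  "loss_plus i \<equiv> (\<lambda>(zt, u, w). loss f lt w (zt (i, False)))"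

abbreviation u_bit :: "nat \<Rightarrow> (nat \<times> bool \<Rightarrow> 'x \<times> 'y) \<times> (nat \<Rightarrow> bool) \<times> 'w \<Rightarrow> bool" where
  "u_bit i \<equiv> (\<lambda>(zt, u, w). u i)"

definition bit_correlation :: "nat \<Rightarrow> real" where
  "bit_correlation i = (\<integral>\<omega>. (loss_plus i \<omega> - 1/2) * (if u_bit i \<omega> then 1 else -1) \<partial>SS)"

lemma bit_correlation_eq_integral_expected_loss:
  assumes i: "i < n"
  shows "bit_correlation i = (\<integral>x. (if snd x i then 1 else -1)
    * (expected_loss (select n (fst x) (snd x)) (fst x (i, False)) - 1/2) \<partial>(Zs \<Otimes>\<^sub>M Us))"
proof -
  have "bit_correlation i = (\<integral>x. (\<integral>w. (loss_plus i (fst x, snd x, w) - 1/2)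
      * (if u_bit i (fst x, snd x, w) then 1 else -1) \<partial>A (select n (fst x) (snd x))) \<partial>(Zs \<Otimes>\<^sub>M Us))"
    unfolding bit_correlation_def
  proof (rule integral_supersample[where B="1/2"])
    fix x assume "x \<in> space \<Omega>"
    then have "0 \<le> loss_plus i x \<and> loss_plus i x \<le> 1"
      using i by (auto simp: space_pair_measure intro!: loss_bounds space_Zs_component)
    then show "\<bar>(loss_plus i x - 1/2) * (if u_bit i x then 1 else -1)\<bar> \<le> 1/2"
      by (auto simp: abs_mult split: abs_split)
  qed (use i in measurable)
  also have "\<dots> = (\<integral>x. (if snd x i then 1 else -1)
      * (expected_loss (select n (fst x) (snd x)) (fst x (i, False)) - 1/2) \<partial>(Zs \<Otimes>\<^sub>M Us))"
  proof (intro Bochner_Integration.integral_cong refl)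
    fix x assume "x \<in> space (Zs \<Otimes>\<^sub>M Us)"
    then have zt: "fst x \<in> space Zs" by (auto simp: space_pair_measure)
    have s: "select n (fst x) (snd x) \<in> space PS" using zt by (rule select_in_space)
    interpret prob_space "A (select n (fst x) (snd x))" using A_prob s by blast
    show "(\<integral>w. (loss_plus i (fst x, snd x, w) - 1/2) * (if u_bit i (fst x, snd x, w) then 1 else -1)
        \<partial>A (select n (fst x) (snd x)))
      = (if snd x i then 1 else -1) * (expected_loss (select n (fst x) (snd x)) (fst x (i, False)) - 1/2)"
      using integrable_loss[OF s space_Zs_component[OF zt i]]
      by (simp add: expected_loss_def Bochner_Integration.integral_diff prob_space mult.commute)
  qed
  finally show ?thesis .
qed

lemma bit_correlation_eq:
  assumes i: "i < n"
  shows "bit_correlation i = (test_loss - train_loss i) / 2"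
proof -
  interpret ZU: pair_prob_space Zs Us by (rule pair_prob_space_Zs_Us)
  define \<Phi> where "\<Phi> zt u = (if u i then 1 else -1) * (expected_loss (select n zt u) (zt (i, False)) - 1/2)"
    for zt u
  have "integrable (Zs \<Otimes>\<^sub>M Us) (\<lambda>(zt, u). \<Phi> zt u)"
  proof (intro ZU.P.integrable_const_bound[where B=1] AE_I2)
    fix x assume "x \<in> space (Zs \<Otimes>\<^sub>M Us)"
    then have "fst x \<in> space Zs" by (auto simp: space_pair_measure)
    from expected_loss_bounds[OF select_in_space[OF this, of "snd x"] space_Zs_component[OF this i, of False]]
    show "norm (case x of (zt, u) \<Rightarrow> \<Phi> zt u) \<le> 1"
      by (auto simp: \<Phi>_def split_beta abs_mult split: abs_split)
  qed (use i in \<open>simp add: \<Phi>_def split_beta', measurable\<close>)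
  then have "(\<integral>x. \<Phi> (fst x) (snd x) \<partial>(Zs \<Otimes>\<^sub>M Us)) = (\<integral>u. (\<integral>zt. \<Phi> zt u \<partial>Zs) \<partial>Us)"
    by (simp add: ZU.integral_snd split_beta')
  then have "bit_correlation i = (\<integral>u. (\<integral>zt. \<Phi> zt u \<partial>Zs) \<partial>Us)"
    unfolding bit_correlation_eq_integral_expected_loss[OF i] \<Phi>_def .
  also have "\<dots> = (\<integral>u. (if u i then 1 else -1) * (column_loss i u - 1/2) \<partial>Us)"
  proof (intro Bochner_Integration.integral_cong refl)
    fix u
    have "integrable Zs (\<lambda>zt. expected_loss (select n zt u) (zt (i, False)))"
      using i abs_expected_loss_le[OF select_in_space space_Zs_component]
      by (intro ZU.M1.integrable_const_bound[where B=1] AE_I2) auto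
    then show "(\<integral>zt. \<Phi> zt u \<partial>Zs) = (if u i then 1 else -1) * (column_loss i u - 1/2)"
      by (simp add: \<Phi>_def column_loss_def Bochner_Integration.integral_diff ZU.M1.prob_space)
  qed
  also have "\<dots> = (\<integral>u. (if u i then 1 else -1) * ((if u i then test_loss else train_loss i) - 1/2) \<partial>Us)"
    using column_loss_selected[OF i] column_loss_unselected[OF i]
    by (intro Bochner_Integration.integral_cong refl) auto
  also have "\<dots> = (\<integral>b. (if b then 1 else -1) * ((if b then test_loss else train_loss i) - 1/2)
      \<partial>distr Us (count_space UNIV) (\<lambda>u. u i))"
    using i by (subst integral_distr) auto
  also have "\<dots> = (test_loss - train_loss i) / 2"
    unfolding distr_Us_component[OF i] by (simp add: field_simps)
  finally show ?thesis .
qed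

lemma gen_err_eq_sum_bit_correlation: "gen_err n \<mu> A f lt = 2 / n * (\<Sum>i<n. bit_correlation i)"
  using n_pos
  by (simp add: gen_err_def pop_risk_eq_test_loss emp_risk_eq_train_loss bit_correlation_eq
      sum_divide_distrib[symmetric] sum_subtractf field_simps)

lemma bit_correlation_sq_le_mutual_information:
  assumes i: "i < n"
  shows "(bit_correlation i)\<^sup>2
    \<le> prob_space.mutual_information SS (exp 1) borel (count_space UNIV) (loss_plus i) (u_bit i)"
  unfolding bit_correlation_def
proof (rule mutual_information_fair_bit_ge[OF prob_space_supersample _ _ _ distr_supersample_bit[OF i]])
  show "loss_plus i \<in> borel_measurable SS" "u_bit i \<in> measurable SS (count_space UNIV)"
    unfolding measurable_supersample_iff using i by measurable
  fix \<omega> assume "\<omega> \<in> space SS"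
  then show "0 \<le> loss_plus i \<omega> \<and> loss_plus i \<omega> \<le> 1"
    using i sets_eq_imp_space_eq[OF sets_supersample]
    by (auto simp: space_pair_measure intro!: loss_bounds space_Zs_component)
qed

lemma mutual_information_le_conditional_mutual_information:
  assumes i: "i < n"
  shows "prob_space.mutual_information SS (exp 1) borel (count_space UNIV) (loss_plus i) (u_bit i)
    \<le> prob_space.conditional_mutual_information SS (exp 1) (count_space UNIV) MP Zs
        (u_bit i) (\<lambda>(zt, u, w). f w (fst (zt (i, False)))) (\<lambda>(zt, u, w). zt)"
proof -
  let ?F = "\<lambda>(zt, u, w). f w (fst (zt (i, False)))"
  let ?Z = "\<lambda>(zt, u, w). zt :: nat \<times> bool \<Rightarrow> 'x \<times> 'y"
  have [measurable]: "(\<lambda>zt. zt (i, False)) \<in> measurable Zs (MX \<Otimes>\<^sub>M MY)"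
    using measurable_Zs_component[OF i] by (simp add: measurable_cong_sets[OF refl mu_sets])
  have V: "(\<lambda>\<omega>. (?F \<omega>, ?Z \<omega>)) \<in> measurable SS (MP \<Otimes>\<^sub>M Zs)"
    unfolding measurable_supersample_iff split_beta' by measurable
  have bit: "u_bit i \<in> measurable SS (count_space UNIV)"
    unfolding measurable_supersample_iff using i by measurable
  define h where "h x = lt (fst x) (snd (snd x (i, False)))" for x :: "'p \<times> (nat \<times> bool \<Rightarrow> 'x \<times> 'y)"
  have h: "h \<in> borel_measurable (MP \<Otimes>\<^sub>M Zs)"
    unfolding h_def by measurable
  have "loss_plus i = (\<lambda>\<omega>. h (?F \<omega>, ?Z \<omega>))"
    by (auto simp: fun_eq_iff h_def loss_def)
  then have "prob_space.mutual_information SS (exp 1) borel (count_space UNIV) (loss_plus i) (u_bit i)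
      \<le> prob_space.mutual_information SS (exp 1) (count_space UNIV) (MP \<Otimes>\<^sub>M Zs) (u_bit i)
          (\<lambda>\<omega>. (?F \<omega>, ?Z \<omega>))"
    using mutual_information_fair_bit_le_of_function[OF prob_space_supersample V bit
        distr_supersample_bit[OF i] h] by simp
  moreover have "prob_space.mutual_information SS (exp 1) (count_space UNIV) Zs (u_bit i) ?Z = 0"
  proof (rule mutual_information_eq_0_if_joint_eq_product[OF prob_space_supersample bit])
    show "?Z \<in> measurable SS Zs" unfolding measurable_supersample_iff split_beta' by measurable
    show "distr SS (count_space UNIV \<Otimes>\<^sub>M Zs) (\<lambda>\<omega>. (u_bit i \<omega>, ?Z \<omega>))
        = distr SS (count_space UNIV) (u_bit i) \<Otimes>\<^sub>M distr SS Zs ?Z"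
      using distr_supersample_bit_Zs[OF i]
      by (simp add: split_beta' distr_supersample_bit[OF i, unfolded split_beta'] distr_supersample_Zs[unfolded split_beta'])
  qed
  ultimately show ?thesis
    by (simp add: prob_space.conditional_mutual_information_def[OF prob_space_supersample])
qed

end

theorem theorem6:
  fixes n :: nat
    and \<mu> :: "('x \<times> 'y) measure"
    and MX :: "'x measure" and MY :: "'y measure"
    and MW :: "'w measure" and MP :: "'p measure"
    and A :: "(nat \<Rightarrow> 'x \<times> 'y) \<Rightarrow> 'w measure"
    and f :: "'w \<Rightarrow> 'x \<Rightarrow> 'p"
    and lt :: "'p \<Rightarrow> 'y \<Rightarrow> real"
  assumes n_pos: "0 < n"
    and mu_prob: "prob_space \<mu>"
    and mu_sets: "sets \<mu> = sets (MX \<Otimes>\<^sub>M MY)"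
    and f_meas: "(\<lambda>(w, x). f w x) \<in> measurable (MW \<Otimes>\<^sub>M MX) MP"
    and lt_meas: "(\<lambda>(p, y). lt p y) \<in> borel_measurable (MP \<Otimes>\<^sub>M MY)"
    and A_kernel: "A \<in> measurable (PiM {..<n} (\<lambda>_. \<mu>)) (subprob_algebra MW)"
    and A_prob: "\<forall>s \<in> space (PiM {..<n} (\<lambda>_. \<mu>)). prob_space (A s)"
    and loss_01: "\<forall>w \<in> space MW. \<forall>z \<in> space \<mu>. 0 \<le> loss f lt w z \<and> loss f lt w z \<le> 1"
  shows
    "\<bar>gen_err n \<mu> A f lt\<bar>
       \<le> 2 / real n * (\<Sum>i<n. sqrt (2 *
            prob_space.mutual_information (supersample n \<mu> MW A) (exp 1)
              borel (count_space UNIV)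
              (\<lambda>(zt, u, w). loss f lt w (zt (i, False)))
              (\<lambda>(zt, u, w). u i)))
     \<and> 2 / real n * (\<Sum>i<n. sqrt (2 *
            prob_space.mutual_information (supersample n \<mu> MW A) (exp 1)
              borel (count_space UNIV)
              (\<lambda>(zt, u, w). loss f lt w (zt (i, False)))
              (\<lambda>(zt, u, w). u i)))
       \<le> 2 / real n * (\<Sum>i<n. sqrt (2 *
            prob_space.conditional_mutual_information (supersample n \<mu> MW A) (exp 1)
              (count_space UNIV) MP (zt_space n \<mu>)
              (\<lambda>(zt, u, w). u i)
              (\<lambda>(zt, u, w). f w (fst (zt (i, False))))
              (\<lambda>(zt, u, w). zt)))"
proof -
  interpret supersample_setting n \<mu> MX MY MW MP A f lt
    using assms unfolding supersample_setting_def by blast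
  let ?I = "\<lambda>i. prob_space.mutual_information SS (exp 1) borel (count_space UNIV) (loss_plus i) (u_bit i)"
  have per_bit: "\<bar>bit_correlation i\<bar> \<le> sqrt (2 * ?I i)" if "i < n" for i
  proof -
    have "\<bar>bit_correlation i\<bar> = sqrt ((bit_correlation i)\<^sup>2)" by simp
    also have "\<dots> \<le> sqrt (2 * ?I i)"
      using bit_correlation_sq_le_mutual_information[OF that] zero_le_power2[of "bit_correlation i"]
      by (intro real_sqrt_le_mono) linarith
    finally show ?thesis .
  qed
  have "\<bar>gen_err n \<mu> A f lt\<bar> = 2 / n * \<bar>\<Sum>i<n. bit_correlation i\<bar>"
    by (simp add: gen_err_eq_sum_bit_correlation abs_mult)
  also have "\<dots> \<le> 2 / n * (\<Sum>i<n. sqrt (2 * ?I i))"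
    using per_bit by (intro mult_left_mono order.trans[OF sum_abs sum_mono]) auto
  finally have "\<bar>gen_err n \<mu> A f lt\<bar> \<le> 2 / n * (\<Sum>i<n. sqrt (2 * ?I i))" .
  moreover have "2 / n * (\<Sum>i<n. sqrt (2 * ?I i))
      \<le> 2 / n * (\<Sum>i<n. sqrt (2 * prob_space.conditional_mutual_information SS (exp 1)
            (count_space UNIV) MP Zs (u_bit i) (\<lambda>(zt, u, w). f w (fst (zt (i, False)))) (\<lambda>(zt, u, w). zt)))"
    using mutual_information_le_conditional_mutual_information
    by (intro mult_left_mono sum_mono real_sqrt_le_mono) auto
  ultimately show ?thesis by simp
qed

end
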